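(* Let $X=(X(s))_{s\in\mathbb S}$, $\mathbb S\subset\mathbb R^2$, be a stationary spatial process and let $\mathcal D_X=(\mathcal D_X(s))_{s\in\mathbb S}$ be a positive damage function of $X$. For a region $\mathcal A\subset\mathbb S$ of finite positive Lebesgue measure $|\mathcal A|$ put $$L(\mathcal A,\mathcal D_X)=\frac{1}{|\mathcal A|}\int_{\mathcal A}\mathcal D_X(s)\,\mathrm ds,\qquad \mathcal R_1(\mathcal A,\mathcal D_X)=\mathrm{Var}\big(L(\mathcal A,\mathcal D_X)\big).$$ Then: (i) (invariance by translation) for every region $\mathcal A$ and every $v\in\mathbb R^2$ with $\mathcal A+v\subset\mathbb S$, $\mathcal R_1(\mathcal A+v,\mathcal D_X)=\mathcal R_1(\mathcal A,\mathcal D_X)$; (ii) (sub-additivity) for any two disjoint regions $\mathcal A_1,\mathcal A_2\subset\mathbb S$, $\mathcal R_1(\mathcal A_1\cup\mathcal A_2,\mathcal D_X)\le \mathcal R_1(\mathcal A_1,\mathcal D_X)+\mathcal R_1(\mathcal A_2,\mathcal D_X)$.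
   Context: A damage function of $X$ is a nonnegative process obtained pointwise from $X$, i.e. $\mathcal D_X(s)=g(X(s))$ for a fixed measurable function $g$ with values in $\mathbb R_+$ (for example $g(x)=(x-u)^+$); it is assumed that $\mathcal D_X$ is jointly measurable and square integrable so that the integrals and variances above are well defined. $\mathcal A+v=\{a+v:a\in\mathcal A\}$. *)

theory Defs
  imports "HOL-Probability.Probability"
begin

type_synonym point = "real \<times> real"

definition stationary_on ::
  "'a measure \<Rightarrow> point set \<Rightarrow> (point \<Rightarrow> 'a \<Rightarrow> real) \<Rightarrow> bool" where
  "stationary_on M S X \<longleftrightarrow>
     (\<forall>(n::nat) (ss::nat \<Rightarrow> point) (v::point).
        (\<forall>i<n. ss i \<in> S \<and> ss i + v \<in> S) \<longrightarrow>
        distr M (Pi\<^sub>M {..<n} (\<lambda>_. borel)) (\<lambda>\<omega>. \<lambda>i\<in>{..<n}. X (ss i) \<omega>)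
        = distr M (Pi\<^sub>M {..<n} (\<lambda>_. borel)) (\<lambda>\<omega>. \<lambda>i\<in>{..<n}. X (ss i + v) \<omega>))"

definition region :: "point set \<Rightarrow> point set \<Rightarrow> bool" where
  "region S A \<longleftrightarrow> A \<in> sets lborel \<and> A \<subseteq> S \<and>
     0 < emeasure lborel A \<and> emeasure lborel A < \<infinity>"

text \<open>Spatial average of the damage D_X(s) = g (X s) over A.\<close>
definition L_avg :: "(real \<Rightarrow> real) \<Rightarrow> (point \<Rightarrow> 'a \<Rightarrow> real) \<Rightarrow> point set \<Rightarrow> 'a \<Rightarrow> real" where
  "L_avg g X A \<omega> = (1 / measure lborel A) * (LINT s:A|lborel. g (X s \<omega>))"

definition R1 :: "'a measure \<Rightarrow> (real \<Rightarrow> real) \<Rightarrow> (point \<Rightarrow> 'a \<Rightarrow> real) \<Rightarrow> point set \<Rightarrow> real" where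
  "R1 M g X A = (LINT \<omega>|M. (L_avg g X A \<omega> - (LINT \<omega>'|M. L_avg g X A \<omega>'))\<^sup>2)"

end

theory Submission
  imports Defs
begin

text \<open>By Fubini, the first two moments of the spatial average \<open>L(A)\<close> are the integrals over
  \<open>A\<close> and \<open>A \<times> A\<close> of the point moments \<open>E D(s)\<close> and \<open>E D(s) D(t)\<close> of the damage, divided by
  \<open>|A|\<close> and \<open>|A|\<^sup>2\<close>. Stationarity makes the point moments invariant under a common shift of \<open>s\<close>
  and \<open>t\<close>, and Lebesgue measure is translation invariant, so \<open>L(A + v)\<close> and \<open>L(A)\<close> have the same
  variance. For disjoint \<open>A\<^sub>1, A\<^sub>2\<close> the average over the union is the convex combination of
  \<open>L(A\<^sub>1)\<close> and \<open>L(A\<^sub>2)\<close> with weights \<open>|A\<^sub>i| / |A\<^sub>1 \<union> A\<^sub>2|\<close>, and the variance is convex.\<close>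

section \<open>Variance\<close>

lemma (in prob_space) variance_convex_combination:
  fixes X Y :: "'a \<Rightarrow> real"
  assumes X: "integrable M X" "integrable M (\<lambda>\<omega>. (X \<omega>)\<^sup>2)"
    and Y: "integrable M Y" "integrable M (\<lambda>\<omega>. (Y \<omega>)\<^sup>2)"
    and w: "0 \<le> w" "w \<le> 1"
  shows "variance (\<lambda>\<omega>. w * X \<omega> + (1 - w) * Y \<omega>) \<le> w * variance X + (1 - w) * variance Y"
proof -
  let ?x = "\<lambda>\<omega>. X \<omega> - expectation X" and ?y = "\<lambda>\<omega>. Y \<omega> - expectation Y"
  have centered: "integrable M (\<lambda>\<omega>. (Z \<omega> - c)\<^sup>2)"
    if "integrable M Z" "integrable M (\<lambda>\<omega>. (Z \<omega>)\<^sup>2)" for Z :: "'a \<Rightarrow> real" and c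
    using that by (simp add: power2_diff)
  have "variance (\<lambda>\<omega>. w * X \<omega> + (1 - w) * Y \<omega>) = expectation (\<lambda>\<omega>. (w * ?x \<omega> + (1 - w) * ?y \<omega>)\<^sup>2)"
    using X Y by (simp add: algebra_simps)
  also have "\<dots> \<le> expectation (\<lambda>\<omega>. w * (?x \<omega>)\<^sup>2 + (1 - w) * (?y \<omega>)\<^sup>2)"
  proof (rule integral_mono')
    show "integrable M (\<lambda>\<omega>. w * (?x \<omega>)\<^sup>2 + (1 - w) * (?y \<omega>)\<^sup>2)"
      using centered[OF X] centered[OF Y] by simp
    fix \<omega>
    have "w * (?x \<omega>)\<^sup>2 + (1 - w) * (?y \<omega>)\<^sup>2 - (w * ?x \<omega> + (1 - w) * ?y \<omega>)\<^sup>2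
        = w * (1 - w) * (?x \<omega> - ?y \<omega>)\<^sup>2"
      by algebra
    moreover have "0 \<le> w * (1 - w) * (?x \<omega> - ?y \<omega>)\<^sup>2"
      using w by simp
    ultimately show "(w * ?x \<omega> + (1 - w) * ?y \<omega>)\<^sup>2 \<le> w * (?x \<omega>)\<^sup>2 + (1 - w) * (?y \<omega>)\<^sup>2"
      by linarith
    show "0 \<le> w * (?x \<omega>)\<^sup>2 + (1 - w) * (?y \<omega>)\<^sup>2"
      using w by simp
  qed
  also have "\<dots> = w * variance X + (1 - w) * variance Y"
    using centered[OF X] centered[OF Y] by simp
  finally show ?thesis .
qed

lemma (in prob_space) variance_cong_AE:
  fixes X Y :: "'a \<Rightarrow> real"
  assumes "X \<in> borel_measurable M" "Y \<in> borel_measurable M" "AE \<omega> in M. X \<omega> = Y \<omega>"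
  shows "variance X = variance Y"
proof -
  have "expectation X = expectation Y"
    using assms by (intro integral_cong_AE) auto
  then show ?thesis
    using assms by (intro integral_cong_AE) auto
qed

section \<open>Translations of Lebesgue measure\<close>

lemma nn_integral_lborel_translate:
  fixes f :: "'b::euclidean_space \<Rightarrow> ennreal"
  assumes "f \<in> borel_measurable lborel"
  shows "(\<integral>\<^sup>+ x. f (x + v) \<partial>lborel) = (\<integral>\<^sup>+ x. f x \<partial>lborel)"
proof -
  have "(\<integral>\<^sup>+ x. f (x + v) \<partial>lborel) = (\<integral>\<^sup>+ x. f x \<partial>distr lborel borel ((+) v))"
    using assms by (subst nn_integral_distr) (auto simp: add.commute)
  then show ?thesis
    by (simp add: lborel_distr_plus)
qed

lemma translate_eq_vimage: "(\<lambda>a. a + v) ` A = (\<lambda>a. a - v) -` (A :: 'b::ab_group_add set)"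
  by (auto simp: image_iff) (metis diff_add_cancel)

lemma indicator_translate:
  "indicator ((\<lambda>a. a + v) ` A) (x + v) = (indicator A x :: 'c::zero_neq_one)"
  for A :: "'b::ab_group_add set"
  by (simp add: translate_eq_vimage indicator_def)

lemma sets_lborel_translate:
  fixes A :: "'b::euclidean_space set"
  assumes "A \<in> sets lborel"
  shows "(\<lambda>a. a + v) ` A \<in> sets lborel"
  using measurable_sets[of "\<lambda>a. a - v" lborel lborel A] assms
  by (simp add: translate_eq_vimage)

lemma emeasure_lborel_translate:
  fixes A :: "'b::euclidean_space set"
  assumes A: "A \<in> sets lborel"
  shows "emeasure lborel ((\<lambda>a. a + v) ` A) = emeasure lborel A"
proof -
  have "emeasure lborel ((\<lambda>a. a + v) ` A) = (\<integral>\<^sup>+ x. indicator ((\<lambda>a. a + v) ` A) (x + v) \<partial>lborel)"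
    using sets_lborel_translate[OF A]
    by (subst nn_integral_lborel_translate) auto
  also have "\<dots> = emeasure lborel A"
    using A by (simp add: indicator_translate)
  finally show ?thesis .
qed

section \<open>Stationary damage processes\<close>

lemma stationary_on_nn_integral_pair:
  fixes h :: "real \<times> real \<Rightarrow> ennreal"
  assumes st: "stationary_on M S X" and X: "\<forall>s\<in>S. X s \<in> borel_measurable M"
    and h: "h \<in> borel_measurable (borel \<Otimes>\<^sub>M borel)"
    and s: "s \<in> S" "t \<in> S" "s + v \<in> S" "t + v \<in> S"
  shows "(\<integral>\<^sup>+ \<omega>. h (X s \<omega>, X t \<omega>) \<partial>M) = (\<integral>\<^sup>+ \<omega>. h (X (s + v) \<omega>, X (t + v) \<omega>) \<partial>M)"
proof -
  let ?P = "Pi\<^sub>M {..<2::nat} (\<lambda>_. borel :: real measure)"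
  let ?ss = "\<lambda>i::nat. if i = 0 then s else t"
  let ?Y = "\<lambda>u \<omega>. \<lambda>i\<in>{..<2::nat}. X (?ss i + u) \<omega>"
  have Y: "?Y u \<in> measurable M ?P" if "\<forall>i<2. ?ss i + u \<in> S" for u
    by (rule measurable_restrict) (use X that in auto)
  have H: "(\<lambda>x. h (x 0, x 1)) \<in> borel_measurable ?P"
    using h by measurable
  have "distr M ?P (\<lambda>\<omega>. \<lambda>i\<in>{..<2}. X (?ss i) \<omega>) = distr M ?P (?Y v)"
    by (rule st[unfolded stationary_on_def, rule_format]) (use s in auto)
  then have eq: "distr M ?P (?Y 0) = distr M ?P (?Y v)"
    by simp
  have "(\<integral>\<^sup>+ \<omega>. h (X s \<omega>, X t \<omega>) \<partial>M) = (\<integral>\<^sup>+ x. h (x 0, x 1) \<partial>distr M ?P (?Y 0))"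
    using Y[of 0] H s by (subst nn_integral_distr) auto
  also have "\<dots> = (\<integral>\<^sup>+ \<omega>. h (X (s + v) \<omega>, X (t + v) \<omega>) \<partial>M)"
    unfolding eq using Y[of v] H s by (subst nn_integral_distr) auto
  finally show ?thesis .
qed

locale stationary_damage = prob_space M for M :: "'a measure" +
  fixes S :: "point set" and X :: "point \<Rightarrow> 'a \<Rightarrow> real" and g :: "real \<Rightarrow> real"
  assumes X_measurable: "\<forall>s\<in>S. X s \<in> borel_measurable M"
    and stationary: "stationary_on M S X"
    and g_measurable: "g \<in> borel_measurable borel"
    and g_nonneg: "\<forall>x. 0 \<le> g x"
    and damage_measurable: "(\<lambda>(s, \<omega>). indicator S s * g (X s \<omega>)) \<in> borel_measurable (lborel \<Otimes>\<^sub>M M)"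
    and damage_square_integrable: "\<forall>s\<in>S. integrable M (\<lambda>\<omega>. (g (X s \<omega>))\<^sup>2)"
begin

declare g_measurable [measurable]

sublocale lborel_M: pair_sigma_finite lborel M
  by (intro pair_sigma_finite.intro lborel.sigma_finite_measure_axioms sigma_finite_measure_axioms)

lemma measurable_damage_at: "s \<in> S \<Longrightarrow> (\<lambda>\<omega>. g (X s \<omega>)) \<in> borel_measurable M"
  using X_measurable by (auto intro: measurable_compose[OF _ g_measurable])

lemma nn_integral_damage_product_translate:
  assumes "s \<in> S" "t \<in> S" "s + v \<in> S" "t + v \<in> S"
  shows "(\<integral>\<^sup>+ \<omega>. ennreal (g (X s \<omega>) * g (X t \<omega>)) \<partial>M)
       = (\<integral>\<^sup>+ \<omega>. ennreal (g (X (s + v) \<omega>) * g (X (t + v) \<omega>)) \<partial>M)"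
  using stationary_on_nn_integral_pair[OF stationary X_measurable, of "\<lambda>(x, y). ennreal (g x * g y)"]
    assms by simp

lemma nn_integral_damage_translate:
  assumes "s \<in> S" "s + v \<in> S"
  shows "(\<integral>\<^sup>+ \<omega>. ennreal (g (X s \<omega>)) \<partial>M) = (\<integral>\<^sup>+ \<omega>. ennreal (g (X (s + v) \<omega>)) \<partial>M)"
  using stationary_on_nn_integral_pair[OF stationary X_measurable, of "\<lambda>(x, y). ennreal (g x)"]
    assms by simp

definition square_moment :: "point \<Rightarrow> ennreal" where
  "square_moment s = (\<integral>\<^sup>+ \<omega>. ennreal (g (X s \<omega>) * g (X s \<omega>)) \<partial>M)"

lemma square_moment_finite: "s \<in> S \<Longrightarrow> square_moment s < \<infinity>"
  using damage_square_integrable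
  by (simp add: square_moment_def power2_eq_square nn_integral_eq_integral)

lemma square_moment_eq: "s \<in> S \<Longrightarrow> t \<in> S \<Longrightarrow> square_moment t = square_moment s"
  using nn_integral_damage_product_translate[of s s "t - s"] by (simp add: square_moment_def)

definition damage_on :: "point set \<Rightarrow> point \<times> 'a \<Rightarrow> real" where
  "damage_on A = (\<lambda>(s, \<omega>). indicator A s * g (X s \<omega>))"

lemma damage_on_nonneg: "0 \<le> damage_on A p"
  using g_nonneg by (auto simp: damage_on_def split: prod.splits)

lemma damage_on_translate:
  "damage_on ((\<lambda>a. a + v) ` A) (s + v, \<omega>) = indicator A s * g (X (s + v) \<omega>)"
  by (simp add: damage_on_def indicator_translate)

lemma measurable_damage_on:
  assumes "A \<in> sets lborel" "A \<subseteq> S"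
  shows "damage_on A \<in> borel_measurable (lborel \<Otimes>\<^sub>M M)"
proof -
  have "damage_on A = (\<lambda>p. indicator A (fst p) * (\<lambda>(s, \<omega>). indicator S s * g (X s \<omega>)) p)"
    using assms by (auto simp: damage_on_def indicator_def fun_eq_iff)
  also have "\<dots> \<in> borel_measurable (lborel \<Otimes>\<^sub>M M)"
    using assms damage_measurable by measurable
  finally show ?thesis .
qed

text \<open>\<open>L_avg\<close> is a Bochner integral and hence \<open>0\<close> wherever the damage is not integrable
  over \<open>A\<close>; the nonnegative integral \<open>total_damage\<close> has no such junk values and is finite
  almost surely, which makes it additive in \<open>A\<close>.\<close>

definition total_damage :: "point set \<Rightarrow> 'a \<Rightarrow> ennreal" where
  "total_damage A \<omega> = (\<integral>\<^sup>+ s. ennreal (damage_on A (s, \<omega>)) \<partial>lborel)"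

definition mean_damage :: "point set \<Rightarrow> point \<Rightarrow> ennreal" where
  "mean_damage A s = (\<integral>\<^sup>+ \<omega>. ennreal (damage_on A (s, \<omega>)) \<partial>M)"

definition cross_moment :: "point set \<Rightarrow> point \<Rightarrow> point \<Rightarrow> ennreal" where
  "cross_moment A s t = (\<integral>\<^sup>+ \<omega>. ennreal (damage_on A (s, \<omega>) * damage_on A (t, \<omega>)) \<partial>M)"

definition mean_integral :: "point set \<Rightarrow> ennreal" where
  "mean_integral A = (\<integral>\<^sup>+ s. mean_damage A s \<partial>lborel)"

definition cross_integral :: "point set \<Rightarrow> ennreal" where
  "cross_integral A = (\<integral>\<^sup>+ s. \<integral>\<^sup>+ t. cross_moment A s t \<partial>lborel \<partial>lborel)"

context
  fixes A :: "point set"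
  assumes A: "A \<in> sets lborel" "A \<subseteq> S"
begin

declare measurable_damage_on [OF A, measurable]

lemma measurable_total_damage: "total_damage A \<in> borel_measurable M"
  unfolding total_damage_def
  by (rule lborel.borel_measurable_nn_integral[where f="\<lambda>\<omega> s. ennreal (damage_on A (s, \<omega>))"])
    measurable

lemma measurable_mean_damage: "mean_damage A \<in> borel_measurable lborel"
  unfolding mean_damage_def[abs_def]
  by (rule borel_measurable_nn_integral[where f="\<lambda>s \<omega>. ennreal (damage_on A (s, \<omega>))"]) measurable

lemma measurable_cross_moment: "cross_moment A s \<in> borel_measurable lborel"
  unfolding cross_moment_def[abs_def]
  by (rule borel_measurable_nn_integral[where f="\<lambda>t \<omega>. ennreal (damage_on A (s, \<omega>) * damage_on A (t, \<omega>))"])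
    measurable

lemma measurable_nn_integral_cross_moment:
  "(\<lambda>s. \<integral>\<^sup>+ t. cross_moment A s t \<partial>lborel) \<in> borel_measurable lborel"
proof -
  have "(\<lambda>q. cross_moment A (fst q) (snd q)) \<in> borel_measurable (lborel \<Otimes>\<^sub>M lborel)"
    unfolding cross_moment_def
    by (rule borel_measurable_nn_integral[where
          f="\<lambda>q \<omega>. ennreal (damage_on A (fst q, \<omega>) * damage_on A (snd q, \<omega>))"]) measurable
  then show ?thesis
    by (intro lborel.borel_measurable_nn_integral[where f="\<lambda>s t. cross_moment A s t"])
      (simp add: split_beta')
qed

lemma nn_integral_total_damage: "(\<integral>\<^sup>+ \<omega>. total_damage A \<omega> \<partial>M) = mean_integral A"
  unfolding total_damage_def mean_damage_def mean_integral_def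
  using lborel_M.Fubini[of "\<lambda>p. ennreal (damage_on A p)"] by simp

lemma total_damage_square:
  assumes "\<omega> \<in> space M"
  shows "(total_damage A \<omega>)\<^sup>2
    = (\<integral>\<^sup>+ s. \<integral>\<^sup>+ t. ennreal (damage_on A (s, \<omega>) * damage_on A (t, \<omega>)) \<partial>lborel \<partial>lborel)"
proof -
  have [measurable]: "(\<lambda>s. damage_on A (s, \<omega>)) \<in> borel_measurable lborel"
    using assms by measurable
  have "(total_damage A \<omega>)\<^sup>2 = (\<integral>\<^sup>+ s. ennreal (damage_on A (s, \<omega>)) * total_damage A \<omega> \<partial>lborel)"
    unfolding power2_eq_square by (subst nn_integral_multc) (auto simp: total_damage_def)
  also have "\<dots> = (\<integral>\<^sup>+ s. \<integral>\<^sup>+ t. ennreal (damage_on A (s, \<omega>)) * ennreal (damage_on A (t, \<omega>)) \<partial>lborel \<partial>lborel)"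
    unfolding total_damage_def by (intro nn_integral_cong, subst nn_integral_cmult) auto
  finally show ?thesis
    by (simp add: ennreal_mult damage_on_nonneg)
qed

lemma nn_integral_total_damage_square: "(\<integral>\<^sup>+ \<omega>. (total_damage A \<omega>)\<^sup>2 \<partial>M) = cross_integral A"
proof -
  have "(\<integral>\<^sup>+ \<omega>. (total_damage A \<omega>)\<^sup>2 \<partial>M)
      = (\<integral>\<^sup>+ \<omega>. \<integral>\<^sup>+ s. \<integral>\<^sup>+ t. ennreal (damage_on A (s, \<omega>) * damage_on A (t, \<omega>)) \<partial>lborel \<partial>lborel \<partial>M)"
    by (intro nn_integral_cong) (simp add: total_damage_square)
  also have "\<dots> = (\<integral>\<^sup>+ s. \<integral>\<^sup>+ \<omega>. \<integral>\<^sup>+ t. ennreal (damage_on A (s, \<omega>) * damage_on A (t, \<omega>)) \<partial>lborel \<partial>M \<partial>lborel)"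
  proof -
    have "(\<lambda>p. \<integral>\<^sup>+ t. ennreal (damage_on A p * damage_on A (t, snd p)) \<partial>lborel)
        \<in> borel_measurable (lborel \<Otimes>\<^sub>M M)"
      by (rule lborel.borel_measurable_nn_integral[where
            f="\<lambda>p t. ennreal (damage_on A p * damage_on A (t, snd p))"]) measurable
    from lborel_M.Fubini[OF this] show ?thesis
      by simp
  qed
  also have "\<dots> = cross_integral A"
    unfolding cross_integral_def cross_moment_def
  proof (intro nn_integral_cong)
    fix s
    have "(\<lambda>p. ennreal (damage_on A (s, snd p) * damage_on A p)) \<in> borel_measurable (lborel \<Otimes>\<^sub>M M)"
      by measurable
    from lborel_M.Fubini[OF this] show "(\<integral>\<^sup>+ \<omega>. \<integral>\<^sup>+ t. ennreal (damage_on A (s, \<omega>) * damage_on A (t, \<omega>)) \<partial>lborel \<partial>M)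
        = (\<integral>\<^sup>+ t. \<integral>\<^sup>+ \<omega>. ennreal (damage_on A (s, \<omega>) * damage_on A (t, \<omega>)) \<partial>M \<partial>lborel)"
      by simp
  qed
  finally show ?thesis .
qed

end

lemma mean_damage_translate:
  assumes "A \<subseteq> S" "(\<lambda>a. a + v) ` A \<subseteq> S"
  shows "mean_damage ((\<lambda>a. a + v) ` A) (s + v) = mean_damage A s"
proof (cases "s \<in> A")
  case True
  then have "s \<in> S" "s + v \<in> S"
    using assms by auto
  then show ?thesis
    using True nn_integral_damage_translate[of s v]
    by (simp add: mean_damage_def damage_on_translate) (simp add: damage_on_def)
qed (simp add: mean_damage_def damage_on_translate, simp add: damage_on_def)

lemma cross_moment_translate:
  assumes "A \<subseteq> S" "(\<lambda>a. a + v) ` A \<subseteq> S"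
  shows "cross_moment ((\<lambda>a. a + v) ` A) (s + v) (t + v) = cross_moment A s t"
proof (cases "s \<in> A \<and> t \<in> A")
  case True
  then have "s \<in> S" "s + v \<in> S" "t \<in> S" "t + v \<in> S"
    using assms by auto
  then show ?thesis
    using True nn_integral_damage_product_translate[of s t v]
    by (simp add: cross_moment_def damage_on_translate) (simp add: damage_on_def)
qed (auto simp: cross_moment_def damage_on_translate, auto simp: damage_on_def)

lemma mean_integral_translate:
  assumes A: "A \<in> sets lborel" "A \<subseteq> S" and B: "(\<lambda>a. a + v) ` A \<subseteq> S"
  shows "mean_integral ((\<lambda>a. a + v) ` A) = mean_integral A"
  using nn_integral_lborel_translate[OF measurable_mean_damage[OF sets_lborel_translate[OF A(1)] B], of v]
  by (simp add: mean_integral_def mean_damage_translate[OF A(2) B])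

lemma cross_integral_translate:
  assumes A: "A \<in> sets lborel" "A \<subseteq> S" and B: "(\<lambda>a. a + v) ` A \<subseteq> S"
  shows "cross_integral ((\<lambda>a. a + v) ` A) = cross_integral A"
proof -
  let ?B = "(\<lambda>a. a + v) ` A"
  note B' = sets_lborel_translate[OF A(1)] B
  have "cross_integral ?B = (\<integral>\<^sup>+ s. \<integral>\<^sup>+ t. cross_moment ?B (s + v) t \<partial>lborel \<partial>lborel)"
    unfolding cross_integral_def
    by (rule nn_integral_lborel_translate[symmetric, OF measurable_nn_integral_cross_moment[OF B']])
  also have "\<dots> = (\<integral>\<^sup>+ s. \<integral>\<^sup>+ t. cross_moment ?B (s + v) (t + v) \<partial>lborel \<partial>lborel)"
    by (intro nn_integral_cong nn_integral_lborel_translate[symmetric] measurable_cross_moment[OF B'])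
  also have "\<dots> = cross_integral A"
    by (simp add: cross_integral_def cross_moment_translate[OF A(2) B])
  finally show ?thesis .
qed

lemma mean_damage_le:
  assumes "A \<subseteq> S"
  shows "mean_damage A s \<le> (1 + square_moment s) * indicator A s"
proof (cases "s \<in> A")
  case True
  then have s: "s \<in> S"
    using assms by auto
  have "mean_damage A s = (\<integral>\<^sup>+ \<omega>. ennreal (g (X s \<omega>)) \<partial>M)"
    using True by (simp add: mean_damage_def damage_on_def)
  also have "\<dots> \<le> (\<integral>\<^sup>+ \<omega>. 1 + ennreal (g (X s \<omega>) * g (X s \<omega>)) \<partial>M)"
  proof (intro nn_integral_mono)
    fix \<omega>
    have "g (X s \<omega>) \<le> 1 + g (X s \<omega>) * g (X s \<omega>)"
      using sum_squares_bound[of "g (X s \<omega>)" 1] g_nonneg[rule_format, of "X s \<omega>"]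
      by (simp add: power2_eq_square)
    then have "ennreal (g (X s \<omega>)) \<le> ennreal (1 + g (X s \<omega>) * g (X s \<omega>))"
      by (rule ennreal_leI)
    then show "ennreal (g (X s \<omega>)) \<le> 1 + ennreal (g (X s \<omega>) * g (X s \<omega>))"
      by (simp add: ennreal_plus)
  qed
  also have "\<dots> = 1 + square_moment s"
    using measurable_damage_at[OF s] by (subst nn_integral_add) (auto simp: square_moment_def emeasure_space_1)
  finally show ?thesis
    using True by simp
qed (simp add: mean_damage_def damage_on_def)

lemma cross_moment_le:
  assumes "A \<subseteq> S"
  shows "cross_moment A s t \<le> (square_moment s + square_moment t) * indicator A s * indicator A t"
proof (cases "s \<in> A \<and> t \<in> A")
  case True
  then have s: "s \<in> S" "t \<in> S"
    using assms by auto
  have "cross_moment A s t = (\<integral>\<^sup>+ \<omega>. ennreal (g (X s \<omega>) * g (X t \<omega>)) \<partial>M)"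
    using True by (simp add: cross_moment_def damage_on_def)
  also have "\<dots> \<le> (\<integral>\<^sup>+ \<omega>. ennreal (g (X s \<omega>) * g (X s \<omega>)) + ennreal (g (X t \<omega>) * g (X t \<omega>)) \<partial>M)"
  proof (intro nn_integral_mono)
    fix \<omega>
    have "g (X s \<omega>) * g (X t \<omega>) \<le> g (X s \<omega>) * g (X s \<omega>) + g (X t \<omega>) * g (X t \<omega>)"
    proof -
      have "0 \<le> g (X s \<omega>) * g (X t \<omega>)"
        using g_nonneg by simp
      then show ?thesis
        using sum_squares_bound[of "g (X s \<omega>)" "g (X t \<omega>)"] by (simp add: power2_eq_square)
    qed
    then have "ennreal (g (X s \<omega>) * g (X t \<omega>))
        \<le> ennreal (g (X s \<omega>) * g (X s \<omega>) + g (X t \<omega>) * g (X t \<omega>))"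
      by (rule ennreal_leI)
    then show "ennreal (g (X s \<omega>) * g (X t \<omega>))
        \<le> ennreal (g (X s \<omega>) * g (X s \<omega>)) + ennreal (g (X t \<omega>) * g (X t \<omega>))"
      using g_nonneg by (simp add: ennreal_plus)
  qed
  also have "\<dots> = square_moment s + square_moment t"
    using measurable_damage_at[OF s(1)] measurable_damage_at[OF s(2)]
    by (subst nn_integral_add) (auto simp: square_moment_def)
  finally show ?thesis
    using True by simp
qed (auto simp: cross_moment_def damage_on_def)

lemma regionD:
  assumes "region S A"
  shows "A \<in> sets lborel" "A \<subseteq> S" "A \<noteq> {}"
    and "0 < measure lborel A" "emeasure lborel A = ennreal (measure lborel A)"
  using assms by (auto simp: region_def emeasure_eq_ennreal_measure measure_def enn2real_positive_iff)

lemma mean_integral_finite: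
  assumes A: "region S A"
  shows "mean_integral A < \<infinity>"
proof -
  obtain s0 where s0: "s0 \<in> A" "A \<subseteq> S" "A \<in> sets lborel"
    using regionD[OF A] by blast
  let ?c = "square_moment s0"
  have "mean_damage A s \<le> (1 + ?c) * indicator A s" for s
    using mean_damage_le[OF s0(2), of s] square_moment_eq[of s0 s] s0
    by (cases "s \<in> A") (auto simp: subsetD)
  then have "mean_integral A \<le> (\<integral>\<^sup>+ s. (1 + ?c) * indicator A s \<partial>lborel)"
    unfolding mean_integral_def by (intro nn_integral_mono)
  also have "\<dots> = (1 + ?c) * emeasure lborel A"
    using s0 by (simp add: nn_integral_cmult_indicator)
  also have "\<dots> < \<infinity>"
    using A square_moment_finite[of s0] s0 by (auto simp: region_def ennreal_mult_less_top)
  finally show ?thesis .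
qed

lemma cross_integral_finite:
  assumes A: "region S A"
  shows "cross_integral A < \<infinity>"
proof -
  obtain s0 where s0: "s0 \<in> A" "A \<subseteq> S" "A \<in> sets lborel"
    using regionD[OF A] by blast
  let ?c = "square_moment s0"
  have "cross_moment A s t \<le> (?c + ?c) * indicator A s * indicator A t" for s t
    using cross_moment_le[OF s0(2), of s t] square_moment_eq[of s0 s] square_moment_eq[of s0 t] s0
    by (cases "s \<in> A \<and> t \<in> A") (auto simp: subsetD)
  then have "cross_integral A \<le> (\<integral>\<^sup>+ s. \<integral>\<^sup>+ t. (?c + ?c) * indicator A s * indicator A t \<partial>lborel \<partial>lborel)"
    unfolding cross_integral_def by (intro nn_integral_mono)
  also have "\<dots> = (?c + ?c) * emeasure lborel A * emeasure lborel A"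
    using s0 by (simp add: nn_integral_cmult_indicator nn_integral_multc)
  also have "\<dots> < \<infinity>"
    using A square_moment_finite[of s0] s0 by (auto simp: region_def ennreal_mult_less_top)
  finally show ?thesis .
qed

lemma total_damage_moments:
  assumes A: "region S A"
  shows "integrable M (\<lambda>\<omega>. enn2real (total_damage A \<omega>))"
    and "integrable M (\<lambda>\<omega>. (enn2real (total_damage A \<omega>))\<^sup>2)"
    and "expectation (\<lambda>\<omega>. enn2real (total_damage A \<omega>)) = enn2real (mean_integral A)"
    and "expectation (\<lambda>\<omega>. (enn2real (total_damage A \<omega>))\<^sup>2) = enn2real (cross_integral A)"
proof -
  note A' = regionD(1,2)[OF A]
  note [measurable] = measurable_total_damage[OF A']
  have finite: "AE \<omega> in M. total_damage A \<omega> \<noteq> \<infinity>"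
    using mean_integral_finite[OF A] nn_integral_total_damage[OF A']
    by (intro nn_integral_PInf_AE) auto
  have first: "(\<integral>\<^sup>+ \<omega>. ennreal (enn2real (total_damage A \<omega>)) \<partial>M) = mean_integral A"
    unfolding nn_integral_total_damage[OF A', symmetric] using finite
    by (intro nn_integral_cong_AE) (auto simp: less_top)
  have second: "(\<integral>\<^sup>+ \<omega>. ennreal ((enn2real (total_damage A \<omega>))\<^sup>2) \<partial>M) = cross_integral A"
    unfolding nn_integral_total_damage_square[OF A', symmetric] using finite
    by (intro nn_integral_cong_AE) (auto simp: less_top ennreal_power[symmetric])
  show "integrable M (\<lambda>\<omega>. enn2real (total_damage A \<omega>))"
    using mean_integral_finite[OF A] first by (intro integrableI_nonneg) auto
  show "integrable M (\<lambda>\<omega>. (enn2real (total_damage A \<omega>))\<^sup>2)"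
    using cross_integral_finite[OF A] second by (intro integrableI_nonneg) auto
  show "expectation (\<lambda>\<omega>. enn2real (total_damage A \<omega>)) = enn2real (mean_integral A)"
    by (subst integral_eq_nn_integral) (auto simp: first)
  show "expectation (\<lambda>\<omega>. (enn2real (total_damage A \<omega>))\<^sup>2) = enn2real (cross_integral A)"
    by (subst integral_eq_nn_integral) (auto simp: second)
qed

lemma L_avg_eq_total_damage:
  assumes A: "region S A" and \<omega>: "\<omega> \<in> space M"
  shows "L_avg g X A \<omega> = enn2real (total_damage A \<omega>) / measure lborel A"
proof -
  note [measurable] = measurable_damage_on[OF regionD(1,2)[OF A]]
  have "(LINT s:A|lborel. g (X s \<omega>)) = (\<integral> s. damage_on A (s, \<omega>) \<partial>lborel)"
    by (simp add: set_lebesgue_integral_def damage_on_def)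
  also have "\<dots> = enn2real (total_damage A \<omega>)"
    unfolding total_damage_def using \<omega>
    by (intro integral_eq_nn_integral) (measurable, simp add: damage_on_nonneg)
  finally show ?thesis
    by (simp add: L_avg_def)
qed

lemma L_avg_moments:
  assumes A: "region S A"
  shows "integrable M (L_avg g X A)"
    and "integrable M (\<lambda>\<omega>. (L_avg g X A \<omega>)\<^sup>2)"
    and "expectation (L_avg g X A) = enn2real (mean_integral A) / measure lborel A"
    and "expectation (\<lambda>\<omega>. (L_avg g X A \<omega>)\<^sup>2) = enn2real (cross_integral A) / (measure lborel A)\<^sup>2"
proof -
  let ?T = "\<lambda>\<omega>. enn2real (total_damage A \<omega>)" and ?m = "measure lborel A"
  have eq: "L_avg g X A \<omega> = ?T \<omega> / ?m" if "\<omega> \<in> space M" for \<omega>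
    using L_avg_eq_total_damage[OF A that] .
  have eq2: "(L_avg g X A \<omega>)\<^sup>2 = (?T \<omega>)\<^sup>2 / ?m\<^sup>2" if "\<omega> \<in> space M" for \<omega>
    using eq[OF that] by (simp add: power_divide)
  note T = total_damage_moments[OF A]
  show "integrable M (L_avg g X A)"
    using T(1) by (simp add: Bochner_Integration.integrable_cong[OF refl eq])
  show "integrable M (\<lambda>\<omega>. (L_avg g X A \<omega>)\<^sup>2)"
    using T(2) by (simp add: Bochner_Integration.integrable_cong[OF refl eq2])
  show "expectation (L_avg g X A) = enn2real (mean_integral A) / ?m"
    using T(3) by (simp add: Bochner_Integration.integral_cong[OF refl eq])
  show "expectation (\<lambda>\<omega>. (L_avg g X A \<omega>)\<^sup>2) = enn2real (cross_integral A) / ?m\<^sup>2"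
    using T(4) by (simp add: Bochner_Integration.integral_cong[OF refl eq2])
qed

lemma R1_eq_variance: "R1 M g X A = variance (L_avg g X A)"
  by (simp add: R1_def)

lemma R1_eq_moments:
  assumes "region S A"
  shows "R1 M g X A = enn2real (cross_integral A) / (measure lborel A)\<^sup>2
      - (enn2real (mean_integral A) / measure lborel A)\<^sup>2"
  using variance_eq[OF L_avg_moments(1,2)[OF assms]] L_avg_moments(3,4)[OF assms]
  by (simp add: R1_eq_variance)

lemma region_translate:
  assumes "region S A" "(\<lambda>a. a + v) ` A \<subseteq> S"
  shows "region S ((\<lambda>a. a + v) ` A)"
  using assms sets_lborel_translate[of A v] emeasure_lborel_translate[of A v]
  by (auto simp: region_def)

lemma R1_translate:
  assumes A: "region S A" and B: "(\<lambda>a. a + v) ` A \<subseteq> S"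
  shows "R1 M g X ((\<lambda>a. a + v) ` A) = R1 M g X A"
proof -
  note A' = regionD(1,2)[OF A]
  have "measure lborel ((\<lambda>a. a + v) ` A) = measure lborel A"
    by (simp add: measure_def emeasure_lborel_translate[OF A'(1)])
  then show ?thesis
    using mean_integral_translate[OF A' B] cross_integral_translate[OF A' B]
    by (simp add: R1_eq_moments[OF A] R1_eq_moments[OF region_translate[OF A B]])
qed

lemma region_Un:
  assumes A1: "region S A1" and A2: "region S A2"
  shows "region S (A1 \<union> A2)"
proof -
  have "emeasure lborel (A1 \<union> A2) \<le> emeasure lborel A1 + emeasure lborel A2"
    using A1 A2 by (intro emeasure_subadditive) (auto simp: region_def)
  also have "\<dots> < \<infinity>"
    using A1 A2 by (simp add: region_def)
  finally have "emeasure lborel (A1 \<union> A2) < \<infinity>" .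
  moreover have "emeasure lborel A1 \<le> emeasure lborel (A1 \<union> A2)"
    using A1 A2 by (intro emeasure_mono) (auto simp: region_def)
  ultimately show ?thesis
    using A1 A2 by (auto simp: region_def)
qed

lemma total_damage_Un:
  assumes A1: "A1 \<in> sets lborel" "A1 \<subseteq> S" and A2: "A2 \<in> sets lborel" "A2 \<subseteq> S"
    and disjoint: "A1 \<inter> A2 = {}" and \<omega>: "\<omega> \<in> space M"
  shows "total_damage (A1 \<union> A2) \<omega> = total_damage A1 \<omega> + total_damage A2 \<omega>"
proof -
  note [measurable] = measurable_damage_on[OF A1] measurable_damage_on[OF A2]
  have "damage_on (A1 \<union> A2) (s, \<omega>) = damage_on A1 (s, \<omega>) + damage_on A2 (s, \<omega>)" for s
    using disjoint by (auto simp: damage_on_def indicator_def)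
  then have "total_damage (A1 \<union> A2) \<omega>
      = (\<integral>\<^sup>+ s. ennreal (damage_on A1 (s, \<omega>)) + ennreal (damage_on A2 (s, \<omega>)) \<partial>lborel)"
    by (simp add: total_damage_def ennreal_plus damage_on_nonneg)
  also have "\<dots> = total_damage A1 \<omega> + total_damage A2 \<omega>"
    unfolding total_damage_def using \<omega> by (intro nn_integral_add) measurable
  finally show ?thesis .
qed

lemma L_avg_Un:
  assumes A1: "region S A1" and A2: "region S A2" and disjoint: "A1 \<inter> A2 = {}"
  defines "w \<equiv> measure lborel A1 / (measure lborel A1 + measure lborel A2)"
  shows "AE \<omega> in M. L_avg g X (A1 \<union> A2) \<omega> = w * L_avg g X A1 \<omega> + (1 - w) * L_avg g X A2 \<omega>"
proof -
  let ?m1 = "measure lborel A1" and ?m2 = "measure lborel A2"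
  have m: "measure lborel (A1 \<union> A2) = ?m1 + ?m2"
    using regionD[OF A1] regionD[OF A2] disjoint by (intro measure_Union) auto
  have pos: "0 < ?m1" "0 < ?m2"
    using regionD(4)[OF A1] regionD(4)[OF A2] .
  have weights: "(x + y) / (?m1 + ?m2) = w * (x / ?m1) + (1 - w) * (y / ?m2)" for x y
  proof -
    have "1 - w = ?m2 / (?m1 + ?m2)"
      using pos by (simp add: w_def field_simps)
    then have "w * (x / ?m1) = x / (?m1 + ?m2)" "(1 - w) * (y / ?m2) = y / (?m1 + ?m2)"
      using pos by (simp_all add: w_def)
    then show ?thesis
      by (simp add: add_divide_distrib)
  qed
  have finite: "AE \<omega> in M. total_damage A \<omega> \<noteq> \<infinity>" if A: "region S A" for A
    using mean_integral_finite[OF A] nn_integral_total_damage[OF regionD(1,2)[OF A]]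
    by (intro nn_integral_PInf_AE measurable_total_damage regionD(1,2)[OF A]) auto
  show ?thesis
    using AE_space finite[OF A1] finite[OF A2]
  proof eventually_elim
    case (elim \<omega>)
    have "L_avg g X (A1 \<union> A2) \<omega>
        = (enn2real (total_damage A1 \<omega>) + enn2real (total_damage A2 \<omega>)) / (?m1 + ?m2)"
      using elim total_damage_Un[OF regionD(1,2)[OF A1] regionD(1,2)[OF A2] disjoint]
      by (simp add: L_avg_eq_total_damage[OF region_Un[OF A1 A2]] m enn2real_plus less_top)
    also have "\<dots> = w * L_avg g X A1 \<omega> + (1 - w) * L_avg g X A2 \<omega>"
      using elim by (simp add: L_avg_eq_total_damage[OF A1] L_avg_eq_total_damage[OF A2] weights)
    finally show ?case .
  qed
qed

lemma R1_Un_le: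
  assumes A1: "region S A1" and A2: "region S A2" and disjoint: "A1 \<inter> A2 = {}"
  shows "R1 M g X (A1 \<union> A2) \<le> R1 M g X A1 + R1 M g X A2"
proof -
  define w where "w = measure lborel A1 / (measure lborel A1 + measure lborel A2)"
  have w: "0 \<le> w" "w \<le> 1"
    using regionD(4)[OF A1] regionD(4)[OF A2] by (auto simp: w_def)
  note L1 = L_avg_moments[OF A1] and L2 = L_avg_moments[OF A2]
  have "R1 M g X (A1 \<union> A2) = variance (\<lambda>\<omega>. w * L_avg g X A1 \<omega> + (1 - w) * L_avg g X A2 \<omega>)"
    unfolding R1_eq_variance using L_avg_Un[OF A1 A2 disjoint] L1(1) L2(1)
      L_avg_moments(1)[OF region_Un[OF A1 A2]]
    by (intro variance_cong_AE) (auto simp: w_def)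
  also have "\<dots> \<le> w * R1 M g X A1 + (1 - w) * R1 M g X A2"
    unfolding R1_eq_variance using L1(1,2) L2(1,2) w by (rule variance_convex_combination)
  also have "\<dots> \<le> R1 M g X A1 + R1 M g X A2"
    using w variance_positive[of "L_avg g X A1"] variance_positive[of "L_avg g X A2"]
    by (simp add: R1_eq_variance mult_left_le_one_le add_mono)
  finally show ?thesis .
qed

end

theorem theorem1:
  fixes M :: "'a measure" and S :: "point set"
    and X :: "point \<Rightarrow> 'a \<Rightarrow> real" and g :: "real \<Rightarrow> real"
  assumes "prob_space M"
    and "\<forall>s\<in>S. X s \<in> borel_measurable M"
    and "stationary_on M S X"
    and "g \<in> borel_measurable borel" and "\<forall>x. 0 \<le> g x"
    and "(\<lambda>(s, \<omega>). indicator S s * g (X s \<omega>)) \<in> borel_measurable (lborel \<Otimes>\<^sub>M M)"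
    and "\<forall>s\<in>S. integrable M (\<lambda>\<omega>. (g (X s \<omega>))\<^sup>2)"
  shows "(\<forall>A v. region S A \<and> (\<lambda>a. a + v) ` A \<subseteq> S \<longrightarrow>
            R1 M g X ((\<lambda>a. a + v) ` A) = R1 M g X A)
       \<and> (\<forall>A1 A2. region S A1 \<and> region S A2 \<and> A1 \<inter> A2 = {} \<longrightarrow>
            R1 M g X (A1 \<union> A2) \<le> R1 M g X A1 + R1 M g X A2)"
proof -
  interpret stationary_damage M S X g
    using assms by (simp add: stationary_damage_def stationary_damage_axioms_def)
  show ?thesis
    using R1_translate R1_Un_le by blast
qed

end
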